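(* Let $\mathcal M\subset \mathcal M_n(\mathbb R)$ be a compact convex set of irreducible Metzler matrices. There exist a time $T>0$ and a rate $\mu>0$ such that for all $t\ge T$, all $M\in L^\infty(0,t)$ and all $x,y\in K_+$, \[ d(R(t,M)x,R(t,M)y)\le e^{-\mu t}d(x,y). \]
   Context: A matrix is Metzler if its off-diagonal entries are nonnegative; it is irreducible if for every partition $\{1,\dots,n\}=I\sqcup J$ into nonempty sets some $m_{ij}$ with $i\in I$, $j\in J$ is positive. $K_+$ is the positive orthant of $\mathbb R^n$. $L^\infty(0,t)$ is the set of measurable controls $M:[0,t]\to\mathcal M$; $R(t,M)$ is the resolvent of $\dot x=M(s)x$ on $[0,t]$. $d(x,y)=\log\max_{i,j}\frac{x_iy_j}{x_jy_i}$ is Hilbert's projective metric on $K_+$. *)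

theory Defs
  imports "HOL-Analysis.Analysis"
begin

definition metzler :: "real^'n^'n \<Rightarrow> bool" where
  "metzler A \<longleftrightarrow> (\<forall>i j. i \<noteq> j \<longrightarrow> 0 \<le> A $ i $ j)"

definition irreducible_mat :: "real^'n^'n \<Rightarrow> bool" where
  "irreducible_mat A \<longleftrightarrow>
     (\<forall>I::'n set. I \<noteq> {} \<and> I \<noteq> UNIV \<longrightarrow> (\<exists>i\<in>I. \<exists>j\<in>-I. 0 < A $ i $ j))"

definition pos_orthant :: "(real^'n) set" where
  "pos_orthant = {x. \<forall>i. 0 < x $ i}"

definition hilbert_metric :: "real^'n \<Rightarrow> real^'n \<Rightarrow> real" where
  "hilbert_metric x y = ln (Max {(x $ i * y $ j) / (x $ j * y $ i) | i j. True})"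

definition admissible_control :: "real \<Rightarrow> (real^'n^'n) set \<Rightarrow> (real \<Rightarrow> real^'n^'n) \<Rightarrow> bool" where
  "admissible_control t Ms M \<longleftrightarrow>
     M \<in> borel_measurable (lebesgue_on {0..t}) \<and> (\<forall>s\<in>{0..t}. M s \<in> Ms)"

text \<open>Fundamental matrix solution (Caratheodory sense) of Phi' = M(s) Phi, Phi(0) = I on [0,t].\<close>
definition is_fundamental_solution :: "real \<Rightarrow> (real \<Rightarrow> real^'n^'n) \<Rightarrow> (real \<Rightarrow> real^'n^'n) \<Rightarrow> bool" where
  "is_fundamental_solution t M Phi \<longleftrightarrow>
     continuous_on {0..t} Phi \<and>
     (\<forall>s\<in>{0..t}. ((\<lambda>r. M r ** Phi r) has_integral (Phi s - mat 1)) {0..s})"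

definition resolvent :: "real \<Rightarrow> (real \<Rightarrow> real^'n^'n) \<Rightarrow> real^'n^'n" where
  "resolvent t M = (THE A. \<exists>Phi. is_fundamental_solution t M Phi \<and> Phi t = A)"

end

(* A compact set of irreducible Metzler matrices has uniform data: a bound B on the norms and, by
   compactness, a lower bound \<delta> > 0 on the flow \<Sum>i\<notin>S. \<Sum>l\<in>S. A_il across every cut S.
   Cut [0, t] into \<lfloor>t\<rfloor> blocks of length in [1, 2) and approximate the resolvent by explicit Euler
   products of averages of M, which again lie in the set. Within a block the diagonal decays at most
   like exp (-2B), while positivity spreads from each index to a new one at least once per n-th of
   the block; hence every block product has all entries between constants \<gamma> and \<Gamma> depending only
   on n, B and \<delta>. A positive matrix whose columns are comparable within the factor \<gamma>/\<Gamma> contracts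
   Hilbert's metric by a fixed factor (Birkhoff), so the Euler products, and in the limit the
   resolvent, contract by (1 - \<epsilon>)^\<lfloor>t\<rfloor> \<le> exp (-\<epsilon> t / 2). *)

theory Submission
  imports Defs
begin

section \<open>Hilbert's projective metric and Birkhoff contraction\<close>

lemma ln_le_iff_le_exp: "0 < (x::real) \<Longrightarrow> ln x \<le> c \<longleftrightarrow> x \<le> exp c"
  by (metis exp_gt_zero ln_exp ln_le_cancel_iff)

lemma hilbert_metric_le_iff:
  fixes x y :: "real^'n"
  assumes "x \<in> pos_orthant" "y \<in> pos_orthant"
  shows "hilbert_metric x y \<le> c \<longleftrightarrow> (\<forall>i j. x$i * y$j \<le> exp c * (x$j * y$i))"
proof -
  define S where "S = (\<lambda>(i, j). (x$i * y$j) / (x$j * y$i)) ` (UNIV :: ('n \<times> 'n) set)"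
  have xp: "\<And>i. 0 < x$i" and yp: "\<And>i. 0 < y$i" using assms by (auto simp: pos_orthant_def)
  have fin: "finite S" by (simp add: S_def)
  obtain i0 :: 'n where True by simp
  have "1 = (\<lambda>(i, j). (x$i * y$j) / (x$j * y$i)) (i0, i0)" using xp[of i0] yp[of i0] by simp
  also have "\<dots> \<in> S" unfolding S_def by (rule imageI[OF UNIV_I])
  finally have "1 \<in> S" .
  hence Max_pos: "0 < Max S" using fin by (meson Max_ge less_le_trans zero_less_one)
  have "hilbert_metric x y = ln (Max S)"
    unfolding hilbert_metric_def S_def by (rule arg_cong[where f = "\<lambda>A. ln (Max A)"]) auto
  hence "hilbert_metric x y \<le> c \<longleftrightarrow> (\<forall>s\<in>S. s \<le> exp c)"
    using Max_pos Max_le_iff[OF fin, of "exp c"] \<open>1 \<in> S\<close> by (auto simp: ln_le_iff_le_exp)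
  also have "\<dots> \<longleftrightarrow> (\<forall>i j. x$i * y$j \<le> exp c * (x$j * y$i))"
    using xp yp by (auto simp: S_def divide_le_eq)
  finally show ?thesis .
qed

lemma hilbert_metric_nonneg:
  fixes x y :: "real^'n"
  assumes "x \<in> pos_orthant" "y \<in> pos_orthant"
  shows "0 \<le> hilbert_metric x y"
proof -
  obtain i :: 'n where True by simp
  have "x$i * y$i \<le> exp (hilbert_metric x y) * (x$i * y$i)"
    using hilbert_metric_le_iff[OF assms] by blast
  moreover have "0 < x$i * y$i" using assms by (simp add: pos_orthant_def)
  ultimately show ?thesis by (simp add: mult_le_cancel_right1)
qed

lemma hilbert_metric_sandwich:
  fixes x y :: "real^'n"
  assumes "x \<in> pos_orthant" "y \<in> pos_orthant"
  obtains m where "0 < m" "\<And>l. m * y$l \<le> x$l" "\<And>l. x$l \<le> exp (hilbert_metric x y) * m * y$l"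
proof -
  have xp: "\<And>i. 0 < x$i" and yp: "\<And>i. 0 < y$i" using assms by (auto simp: pos_orthant_def)
  define f where "f l = x$l / y$l" for l
  have "Min (range f) \<in> range f" by (rule Min_in) auto
  then obtain j where j_min: "f j = Min (range f)" by (metis rangeE)
  have j: "x$j / y$j \<le> x$l / y$l" for l
    using Min_le[of "range f" "f l"] unfolding j_min[symmetric] f_def by auto
  show ?thesis
  proof
    show "0 < x$j / y$j" using xp yp by simp
    show "x$j / y$j * y$l \<le> x$l" for l using j[of l] yp[of l] by (simp add: field_simps)
    show "x$l \<le> exp (hilbert_metric x y) * (x$j / y$j) * y$l" for l
      using hilbert_metric_le_iff[OF assms, THEN iffD1, OF order_refl, rule_format, of l j] yp[of j]
      by (simp add: field_simps)
  qed
qed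

text \<open>If ln r is large compared with -ln q, the bound 1/q wins; otherwise the convex combination
  (1 - q) r + q lies a fixed fraction of ln r below r on the logarithmic scale.\<close>
lemma ln_le_contracted_ln:
  fixes r q \<rho> :: real
  assumes r: "1 \<le> r" and q: "0 < q" "q \<le> 1"
    and \<rho>: "0 < \<rho>" "\<rho> \<le> (1 - q) * r + q" "\<rho> \<le> 1 / q"
  shows "ln \<rho> \<le> (1 - min (1/2) (q^3)) * ln r"
proof -
  define \<epsilon> where "\<epsilon> = min (1/2) (q^3)"
  have \<epsilon>: "0 \<le> \<epsilon>" "\<epsilon> \<le> 1/2" "\<epsilon> \<le> q^3" using q by (auto simp: \<epsilon>_def)
  define d where "d = ln r"
  have d0: "0 \<le> d" using r by (simp add: d_def)
  have rd: "r = exp d" using r by (simp add: d_def)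
  show ?thesis
  proof (cases "-2 * ln q \<le> d")
    case True
    have "ln \<rho> \<le> ln (1 / q)" using \<rho> q by simp
    also have "\<dots> \<le> d / 2" using True q by (simp add: ln_div)
    also have "\<dots> \<le> (1 - \<epsilon>) * d" using mult_right_mono[of "1/2" "1 - \<epsilon>" d] \<epsilon> d0 by simp
    finally show ?thesis by (simp add: \<epsilon>_def d_def)
  next
    case False
    have "q^2 = exp (2 * ln q)" by (simp only: mult_2 exp_add exp_ln[OF q(1)] power2_eq_square)
    also have "\<dots> < exp (-d)" using False by simp
    finally have ed: "q^2 < exp (-d)" .
    have "d * exp (-d) \<le> 1 - exp (-d)"
      using mult_right_mono[OF exp_ge_add_one_self[of d], of "exp (-d)"]
      by (simp add: exp_minus field_simps)
    moreover have "d * q^2 \<le> d * exp (-d)" using ed d0 by (simp add: mult_left_mono)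
    ultimately have "q * (d * q^2) \<le> q * (1 - exp (-d))" using q by (simp add: mult_left_mono)
    moreover have "\<epsilon> * d \<le> q^3 * d" using \<epsilon> d0 by (simp add: mult_right_mono)
    moreover have "1 - \<epsilon> * d \<le> exp (- (\<epsilon> * d))" using exp_ge_add_one_self[of "- (\<epsilon> * d)"] by simp
    ultimately have mix: "(1 - q) + q * exp (-d) \<le> exp (- (\<epsilon> * d))"
      by (simp add: power3_eq_cube power2_eq_square algebra_simps)
    have "\<rho> \<le> (1 - q) * r + q" by (rule \<rho>(2))
    also have "\<dots> = exp d * ((1 - q) + q * exp (-d))" by (simp add: rd exp_minus field_simps)
    also have "\<dots> \<le> exp d * exp (- (\<epsilon> * d))" using mix by simp
    also have "\<dots> = exp ((1 - \<epsilon>) * d)" by (simp add: exp_add[symmetric] algebra_simps)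
    finally show ?thesis using \<rho> by (simp add: ln_le_iff_le_exp \<epsilon>_def d_def)
  qed
qed

lemma cross_ratio_le_mixture:
  fixes Xi Xj Yi Yj m r q :: real
  assumes Y: "0 < Yi" "0 < Yj" and low: "m * Yi \<le> Xi" "m * Yj \<le> Xj" and up: "Xi \<le> r * m * Yi"
    and r: "1 \<le> r" and q: "0 < q" "q \<le> 1"
    and comparable: "q * (Xi - m * Yi) * Yj \<le> (Xj - m * Yj) * Yi"
  shows "Xi * Yj \<le> ((1 - q) * r + q) * (Xj * Yi)"
proof -
  define a where "a = (Xi - m * Yi) / Yi"
  have a0: "0 \<le> a" using low Y by (simp add: a_def)
  have Xi: "Xi = (m + a) * Yi" using Y by (simp add: a_def field_simps)
  have "m + a \<le> r * m" using up Xi Y by simp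
  moreover have "((1 - q) * r + q) * (m + q * a) - (m + a) = q * a * (1 - q) * (r - 1) + (1 - q) * (r * m - m - a)"
    by (simp add: algebra_simps)
  ultimately have mixed: "m + a \<le> ((1 - q) * r + q) * (m + q * a)"
    using q a0 r by (smt (verit) mult_nonneg_nonneg)
  have "Yi * Yj * (m + q * a) = m * Yj * Yi + q * (Xi - m * Yi) * Yj"
    using Y by (simp add: a_def field_simps)
  also have "\<dots> \<le> Xj * Yi" using comparable by (simp add: algebra_simps)
  finally have "Yi * Yj * (m + q * a) \<le> Xj * Yi" .
  moreover have "0 \<le> (1 - q) * r + q" using q r by simp
  ultimately have "((1 - q) * r + q) * (Yi * Yj * (m + q * a)) \<le> ((1 - q) * r + q) * (Xj * Yi)"
    by (rule mult_left_mono)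
  moreover have "Xi * Yj \<le> ((1 - q) * r + q) * (Yi * Yj * (m + q * a))"
    using mult_right_mono[OF mixed, of "Yi * Yj"] Y unfolding Xi by (simp add: ac_simps)
  ultimately show ?thesis by linarith
qed

lemma mult_vec_pos_orthant:
  fixes P :: "real^'n^'n"
  assumes "\<And>i k. 0 < P$i$k" "x \<in> pos_orthant"
  shows "P *v x \<in> pos_orthant"
  using assms by (auto simp: pos_orthant_def matrix_vector_mult_def intro!: sum_pos mult_pos_pos)

lemma comparable_columns_mult_vec:
  fixes P :: "real^'n^'n"
  assumes "\<And>i j k. \<theta> * P$i$k \<le> P$j$k" "\<And>l. 0 \<le> z$l"
  shows "\<theta> * (P *v z)$i \<le> (P *v z)$j"
  unfolding matrix_vector_mult_def
  using assms by (auto simp: sum_distrib_left mult.assoc[symmetric] intro!: sum_mono mult_right_mono)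

lemma mult_vec_mono:
  fixes P :: "real^'n^'n"
  assumes "\<And>i k. 0 \<le> P$i$k" "\<And>l. z$l \<le> w$l"
  shows "(P *v z)$i \<le> (P *v w)$i"
  unfolding matrix_vector_mult_def using assms by (auto intro!: sum_mono mult_left_mono)

lemma cross_ratio_contraction:
  fixes Xi Xj Yi Yj m r \<theta> :: real
  assumes pos: "0 < Xi" "0 < Xj" "0 < Yi" "0 < Yj"
    and low: "m * Yi \<le> Xi" "m * Yj \<le> Xj" and up: "Xi \<le> r * m * Yi" and r: "1 \<le> r"
    and \<theta>: "0 < \<theta>" "\<theta> \<le> 1"
    and comparable: "\<theta> * (Xi - m * Yi) \<le> Xj - m * Yj" "\<theta> * Xi \<le> Xj" "\<theta> * Yj \<le> Yi"
  shows "Xi * Yj \<le> exp ((1 - min (1/2) (\<theta>^6)) * ln r) * (Xj * Yi)"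
proof -
  define q where "q = \<theta>^2"
  define \<rho> where "\<rho> = (Xi * Yj) / (Xj * Yi)"
  have q: "0 < q" "q \<le> 1" using \<theta> by (auto simp: q_def power_le_one)
  have den: "0 < Xj * Yi" and \<rho>0: "0 < \<rho>" using pos by (simp_all add: \<rho>_def)
  have "q * (Xi - m * Yi) * Yj \<le> (Xj - m * Yj) * Yi"
    using mult_mono[OF comparable(1,3)] low pos \<theta> by (simp add: q_def power2_eq_square ac_simps)
  hence "Xi * Yj \<le> ((1 - q) * r + q) * (Xj * Yi)"
    by (intro cross_ratio_le_mixture) (use pos low up r q in auto)
  hence "\<rho> \<le> (1 - q) * r + q" using den by (simp add: \<rho>_def divide_le_eq)
  moreover have "q * (Xi * Yj) \<le> Xj * Yi"
    using mult_mono[OF comparable(2,3)] pos \<theta> by (simp add: q_def power2_eq_square ac_simps)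
  hence "\<rho> \<le> 1 / q" using den q by (simp add: \<rho>_def field_simps)
  ultimately have "ln \<rho> \<le> (1 - min (1/2) (q^3)) * ln r"
    using r q \<rho>0 by (intro ln_le_contracted_ln) auto
  moreover have "q^3 = \<theta>^6" by (simp add: q_def power_mult[symmetric])
  ultimately show ?thesis using \<rho>0 den by (simp add: \<rho>_def ln_le_iff_le_exp divide_le_eq)
qed

lemma hilbert_metric_contraction:
  fixes P :: "real^'n^'n"
  assumes pos: "\<And>i k. 0 < P$i$k" and comparable: "\<And>i j k. \<theta> * P$i$k \<le> P$j$k"
    and \<theta>: "0 < \<theta>" "\<theta> \<le> 1" and x: "x \<in> pos_orthant" and y: "y \<in> pos_orthant"
  shows "hilbert_metric (P *v x) (P *v y) \<le> (1 - min (1/2) (\<theta>^6)) * hilbert_metric x y"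
proof -
  define d where "d = hilbert_metric x y"
  obtain m where m: "0 < m" "\<And>l. m * y$l \<le> x$l" "\<And>l. x$l \<le> exp d * m * y$l"
    using hilbert_metric_sandwich[OF x y] unfolding d_def by blast
  define X where "X = P *v x"
  define Y where "Y = P *v y"
  have XY: "X \<in> pos_orthant" "Y \<in> pos_orthant"
    using mult_vec_pos_orthant[OF pos] x y by (auto simp: X_def Y_def)
  have P0: "\<And>i k. 0 \<le> P$i$k" using pos less_imp_le by blast
  have U: "P *v (x - m *\<^sub>R y) = X - m *\<^sub>R Y"
    by (simp add: X_def Y_def matrix_vector_mult_diff_distrib matrix_vector_mult_scaleR)
  have "\<theta> * (X$i - m * Y$i) \<le> X$j - m * Y$j" for i j
    using comparable_columns_mult_vec[OF comparable, of "x - m *\<^sub>R y" i j] m(2) by (simp add: U)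
  moreover have "\<theta> * X$i \<le> X$j" "\<theta> * Y$i \<le> Y$j" for i j
    using comparable_columns_mult_vec[OF comparable] x y by (auto simp: X_def Y_def pos_orthant_def less_imp_le)
  moreover have "m * Y$i \<le> X$i" for i
    using mult_vec_mono[OF P0, of "m *\<^sub>R y" x i] m(2) by (simp add: X_def Y_def matrix_vector_mult_scaleR)
  moreover have "X$i \<le> exp d * m * Y$i" for i
    using mult_vec_mono[OF P0, of x "(exp d * m) *\<^sub>R y" i] m(3)
    by (simp add: X_def Y_def matrix_vector_mult_scaleR mult.assoc)
  moreover have "1 \<le> exp d" using hilbert_metric_nonneg[OF x y] by (simp add: d_def)
  ultimately have "X$i * Y$j \<le> exp ((1 - min (1/2) (\<theta>^6)) * ln (exp d)) * (X$j * Y$i)" for i j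
    using XY \<theta> by (intro cross_ratio_contraction) (auto simp: pos_orthant_def)
  thus ?thesis unfolding X_def Y_def d_def by (subst hilbert_metric_le_iff) (use XY in \<open>auto simp: X_def Y_def\<close>)
qed

fun mat_prod :: "(nat \<Rightarrow> real^'n^'n) \<Rightarrow> nat \<Rightarrow> real^'n^'n" where
  "mat_prod f 0 = mat 1"
| "mat_prod f (Suc j) = f j ** mat_prod f j"

lemma mat_prod_add: "mat_prod f (a + q) = mat_prod (\<lambda>i. f (a + i)) q ** mat_prod f a"
  by (induction q) (simp_all add: matrix_mul_assoc)

lemma mat_prod_blocks: "mat_prod f (m * q) = mat_prod (\<lambda>b. mat_prod (\<lambda>i. f (b * q + i)) q) m"
proof (induction m)
  case (Suc m)
  have "mat_prod f (Suc m * q) = mat_prod f (m * q + q)" by (simp add: add.commute)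
  thus ?case using Suc by (simp add: mat_prod_add)
qed simp

lemma mat_prod_cong: "(\<And>i. i < q \<Longrightarrow> f i = g i) \<Longrightarrow> mat_prod f q = mat_prod g q"
  by (induction q) auto

lemma mat_prod_entries_ge:
  assumes P: "\<And>b i k. \<gamma> \<le> P b $i$k" and \<gamma>: "0 \<le> \<gamma>" and m: "0 < m"
  shows "\<gamma>^m \<le> mat_prod P m $i$k"
  using m
proof (induction m arbitrary: i rule: nat_induct_non_zero)
  case 1 thus ?case using P by simp
next
  case (Suc m)
  have P0: "0 \<le> P b $i$k" for b i k using P \<gamma> order_trans by blast
  have "0 \<le> mat_prod P m $i$k" for i using Suc.IH \<gamma> zero_le_power order_trans by blast
  hence "\<gamma> * \<gamma>^m \<le> P m $i$i * mat_prod P m $i$k"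
    using P Suc.IH \<gamma> P0 by (intro mult_mono) auto
  also have "\<dots> \<le> (\<Sum>l\<in>UNIV. P m $i$l * mat_prod P m $l$k)"
    using P0 \<open>\<And>i. 0 \<le> mat_prod P m $i$k\<close> by (intro member_le_sum mult_nonneg_nonneg) auto
  finally show ?case by (simp add: matrix_matrix_mult_def)
qed

lemma mat_prod_pos_orthant:
  assumes "\<And>b i k. 0 < P b $i$k" "x \<in> pos_orthant"
  shows "mat_prod P m *v x \<in> pos_orthant"
proof (induction m)
  case (Suc m) thus ?case
    using mult_vec_pos_orthant[of "P m"] assms(1) by (simp add: matrix_vector_mul_assoc[symmetric])
qed (simp add: assms(2))

lemma mat_prod_contraction:
  assumes P: "\<And>b i k. \<gamma> \<le> P b $i$k" "\<And>b i k. P b $i$k \<le> \<Gamma>" and \<gamma>: "0 < \<gamma>"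
    and x: "x \<in> pos_orthant" and y: "y \<in> pos_orthant"
  shows "hilbert_metric (mat_prod P m *v x) (mat_prod P m *v y)
           \<le> (1 - min (1/2) ((\<gamma> / \<Gamma>)^6))^m * hilbert_metric x y"
proof (induction m)
  case (Suc m)
  let ?c = "1 - min (1/2) ((\<gamma> / \<Gamma>)^6)"
  have pos: "\<And>b i k. 0 < P b $i$k" using P(1) \<gamma> less_le_trans by blast
  have "\<gamma> \<le> \<Gamma>" using P[of 0 undefined undefined] by linarith
  hence \<theta>: "0 < \<gamma> / \<Gamma>" "\<gamma> / \<Gamma> \<le> 1" using \<gamma> by auto
  have "\<gamma> / \<Gamma> * P b $i$k \<le> P b $j$k" for b i j k
  proof -
    have "\<gamma> / \<Gamma> * P b $i$k \<le> \<gamma> / \<Gamma> * \<Gamma>" using P(2) \<theta>(1) by (intro mult_left_mono) auto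
    also have "\<dots> = \<gamma>" using \<gamma> \<open>\<gamma> \<le> \<Gamma>\<close> by simp
    finally show ?thesis using P(1) order_trans by blast
  qed
  hence "hilbert_metric (P m *v (mat_prod P m *v x)) (P m *v (mat_prod P m *v y))
      \<le> ?c * hilbert_metric (mat_prod P m *v x) (mat_prod P m *v y)"
    using pos \<theta> mat_prod_pos_orthant[OF pos] x y by (intro hilbert_metric_contraction) auto
  also have "\<dots> \<le> ?c * (?c^m * hilbert_metric x y)" using Suc by (intro mult_left_mono) auto
  finally show ?case by (simp add: matrix_vector_mul_assoc)
qed simp

lemma hilbert_metric_le_of_tendsto:
  fixes P :: "nat \<Rightarrow> real^'n^'n"
  assumes lim: "P \<longlonglongrightarrow> R" and pos: "R *v x \<in> pos_orthant" "R *v y \<in> pos_orthant"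
    and ev: "\<forall>\<^sub>F p in sequentially. P p *v x \<in> pos_orthant \<and> P p *v y \<in> pos_orthant
               \<and> hilbert_metric (P p *v x) (P p *v y) \<le> D"
  shows "hilbert_metric (R *v x) (R *v y) \<le> D"
proof -
  have entry: "(\<lambda>p. (P p *v z)$i) \<longlonglongrightarrow> (R *v z)$i" for z i
    unfolding matrix_vector_mult_def by (simp, intro tendsto_intros lim)
  have "(R *v x)$i * (R *v y)$j \<le> exp D * ((R *v x)$j * (R *v y)$i)" for i j
  proof (rule tendsto_le[OF trivial_limit_sequentially])
    show "(\<lambda>p. exp D * ((P p *v x)$j * (P p *v y)$i)) \<longlonglongrightarrow> exp D * ((R *v x)$j * (R *v y)$i)"
      and "(\<lambda>p. (P p *v x)$i * (P p *v y)$j) \<longlonglongrightarrow> (R *v x)$i * (R *v y)$j"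
      by (intro tendsto_intros entry)+
    show "\<forall>\<^sub>F p in sequentially. (P p *v x)$i * (P p *v y)$j \<le> exp D * ((P p *v x)$j * (P p *v y)$i)"
      using ev by eventually_elim (use hilbert_metric_le_iff in blast)
  qed
  thus ?thesis using hilbert_metric_le_iff[OF pos] by blast
qed

section \<open>Products of Euler steps of Metzler matrices\<close>

definition cut_flow :: "real^'n^'n \<Rightarrow> 'n set \<Rightarrow> real" where
  "cut_flow A S = (\<Sum>i\<in>-S. \<Sum>l\<in>S. A$i$l)"

lemma irreducible_cut_flow_pos:
  assumes "metzler A" "irreducible_mat A" "S \<noteq> {}" "S \<noteq> UNIV"
  shows "0 < cut_flow A S"
proof -
  have "-S \<noteq> {}" "-S \<noteq> UNIV" using assms(3,4) by auto
  then obtain i l where il: "i \<in> -S" "l \<in> S" "0 < A$i$l"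
    using assms(2) unfolding irreducible_mat_def by (metis double_compl)
  have nonneg: "0 \<le> A$i'$l'" if "i' \<in> -S" "l' \<in> S" for i' l'
    using assms(1) that unfolding metzler_def by (metis ComplD)
  have "0 < (\<Sum>l\<in>S. A$i$l)" using il nonneg by (intro sum_pos2) auto
  thus ?thesis unfolding cut_flow_def using il nonneg by (intro sum_pos2) (auto intro: sum_nonneg)
qed

lemma compact_irreducible_cut_flow_bound:
  fixes Ms :: "(real^'n^'n) set"
  assumes "compact Ms" "\<And>A. A \<in> Ms \<Longrightarrow> metzler A \<and> irreducible_mat A"
  obtains \<delta> where "0 < \<delta>" "\<And>S A. S \<noteq> {} \<Longrightarrow> S \<noteq> UNIV \<Longrightarrow> A \<in> Ms \<Longrightarrow> \<delta> \<le> cut_flow A S"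
proof -
  define cuts where "cuts = {S :: 'n set. S \<noteq> {} \<and> S \<noteq> UNIV}"
  have "\<forall>S\<in>cuts. \<exists>d. 0 < d \<and> (\<forall>A\<in>Ms. d \<le> cut_flow A S)"
  proof
    fix S assume "S \<in> cuts"
    show "\<exists>d. 0 < d \<and> (\<forall>A\<in>Ms. d \<le> cut_flow A S)"
    proof (cases "Ms = {}")
      case False
      have "continuous_on Ms (\<lambda>A. cut_flow A S)" unfolding cut_flow_def
        by (intro continuous_on_sum continuous_on_component continuous_on_id)
      then obtain A0 where "A0 \<in> Ms" "\<And>A. A \<in> Ms \<Longrightarrow> cut_flow A0 S \<le> cut_flow A S"
        using continuous_attains_inf[OF assms(1) False] by blast
      moreover have "0 < cut_flow A0 S"
        using assms(2)[OF \<open>A0 \<in> Ms\<close>] \<open>S \<in> cuts\<close> irreducible_cut_flow_pos by (auto simp: cuts_def)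
      ultimately show ?thesis by blast
    qed (auto intro: exI[of _ 1])
  qed
  hence "\<exists>d. \<forall>S\<in>cuts. 0 < d S \<and> (\<forall>A\<in>Ms. d S \<le> cut_flow A S)" by (rule bchoice)
  then obtain d where d: "\<And>S. S \<in> cuts \<Longrightarrow> 0 < d S \<and> (\<forall>A\<in>Ms. d S \<le> cut_flow A S)" by blast
  show ?thesis
  proof
    show "0 < Min (insert 1 (d ` cuts))" using d by (subst Min_gr_iff) auto
    fix S :: "'n set" and A assume "S \<noteq> {}" "S \<noteq> UNIV" "A \<in> Ms"
    hence "S \<in> cuts" by (simp add: cuts_def)
    hence "Min (insert 1 (d ` cuts)) \<le> d S" by (intro Min_le) auto
    also have "\<dots> \<le> cut_flow A S" using d \<open>S \<in> cuts\<close> \<open>A \<in> Ms\<close> by blast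
    finally show "Min (insert 1 (d ` cuts)) \<le> cut_flow A S" .
  qed
qed

lemma exp_neg_two_le_one_minus:
  fixes z :: real assumes "0 \<le> z" "z \<le> 1/2"
  shows "exp (-2 * z) \<le> 1 - z"
proof -
  have "2 * z^2 \<le> z" using mult_left_mono[of "2 * z" 1 z] assms by (simp add: power2_eq_square)
  hence "-2 * z \<le> ln (1 - z)" using ln_one_minus_pos_lower_bound[OF assms] by linarith
  thus ?thesis using assms by (simp add: ln_ge_iff)
qed

lemma exists_ge_average:
  fixes f :: "'a \<Rightarrow> real"
  assumes "finite J" "J \<noteq> {}" "X \<le> (\<Sum>i\<in>J. f i)"
  shows "\<exists>i\<in>J. X / real (card J) \<le> f i"
proof (rule ccontr)
  assume "\<not> ?thesis"
  hence "(\<Sum>i\<in>J. f i) < (\<Sum>i\<in>J. X / real (card J))"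
    using assms by (intro sum_strict_mono) auto
  thus False using assms by simp
qed

locale metzler_steps =
  fixes A :: "nat \<Rightarrow> real^'n^'n" and B h \<delta> :: real
  assumes offdiag_nonneg: "\<And>j i l. i \<noteq> l \<Longrightarrow> 0 \<le> A j $i$l"
    and entry_bound: "\<And>j i l. \<bar>A j $i$l\<bar> \<le> B"
    and cut_bound: "\<And>j S. S \<noteq> {} \<Longrightarrow> S \<noteq> UNIV \<Longrightarrow> \<delta> \<le> cut_flow (A j) S"
    and h_pos: "0 < h" and h_small: "h * B \<le> 1/2"
begin

definition step :: "nat \<Rightarrow> real^'n^'n" where "step j = mat 1 + h *\<^sub>R A j"

definition steps :: "nat \<Rightarrow> real^'n^'n" where "steps j = mat_prod step j"

definition damping :: real where "damping = 1 - h * B"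

lemma B_nonneg: "0 \<le> B" using entry_bound[of 0 undefined undefined] by linarith

lemma damping_pos: "0 < damping" and damping_le_1: "damping \<le> 1"
  using h_small h_pos B_nonneg by (auto simp: damping_def)

lemma step_nth: "step j $i$l = (if i = l then 1 else 0) + h * A j $i$l"
  by (simp add: step_def mat_def)

lemma step_diag_ge: "damping \<le> step j $i$i"
  using mult_left_mono[of "-B" "A j $i$i" h] entry_bound[of j i i] h_pos
  by (simp add: step_nth damping_def)

lemma step_nonneg: "0 \<le> step j $i$l"
  using step_diag_ge[of j i] damping_pos offdiag_nonneg[of i l j] h_pos
  by (cases "i = l") (auto simp: step_nth)

lemma steps_Suc: "steps (Suc j) $i$k = (\<Sum>l\<in>UNIV. step j $i$l * steps j $l$k)"
  by (simp add: steps_def matrix_matrix_mult_def)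

lemma steps_nonneg: "0 \<le> steps j $i$k"
proof (induction j arbitrary: i)
  case 0 thus ?case by (simp add: steps_def mat_def)
next
  case (Suc j) thus ?case by (simp add: steps_Suc step_nonneg sum_nonneg)
qed

lemma steps_le_exp: "steps j $i$k \<le> exp (real CARD('n) * B * (real j * h))"
proof (induction j arbitrary: i)
  case 0 thus ?case by (simp add: steps_def mat_def)
next
  case (Suc j)
  define E where "E = exp (real CARD('n) * B * (real j * h))"
  have row: "(\<Sum>l\<in>UNIV. step j $i$l) \<le> 1 + real CARD('n) * h * B"
  proof -
    have "(\<Sum>l\<in>UNIV. step j $i$l) \<le> (\<Sum>l\<in>UNIV. (if i = l then 1 else 0) + h * B)"
      using entry_bound h_pos by (intro sum_mono) (auto simp: step_nth abs_le_iff)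
    thus ?thesis by (simp add: sum.distrib)
  qed
  have "steps (Suc j) $i$k \<le> (\<Sum>l\<in>UNIV. step j $i$l * E)"
    unfolding steps_Suc E_def using Suc step_nonneg by (intro sum_mono mult_left_mono) auto
  also have "\<dots> \<le> (1 + real CARD('n) * h * B) * E"
    using row by (simp add: sum_distrib_right[symmetric] E_def)
  also have "\<dots> \<le> exp (real CARD('n) * h * B) * E"
    by (simp add: E_def exp_ge_add_one_self)
  also have "\<dots> = exp (real CARD('n) * B * (real (Suc j) * h))"
    by (simp add: E_def exp_add[symmetric] algebra_simps)
  finally show ?case .
qed

lemma steps_Suc_ge:
  assumes "i \<notin> S"
  shows "damping * steps j $i$k + h * (\<Sum>l\<in>S. A j $i$l * steps j $l$k) \<le> steps (Suc j) $i$k"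
proof -
  have "steps (Suc j) $i$k = step j $i$i * steps j $i$k + (\<Sum>l\<in>UNIV-{i}. step j $i$l * steps j $l$k)"
    unfolding steps_Suc by (rule sum.remove) auto
  moreover have "(\<Sum>l\<in>S. step j $i$l * steps j $l$k) \<le> (\<Sum>l\<in>UNIV-{i}. step j $i$l * steps j $l$k)"
    using assms step_nonneg steps_nonneg by (intro sum_mono2) auto
  moreover have "(\<Sum>l\<in>S. step j $i$l * steps j $l$k) = h * (\<Sum>l\<in>S. A j $i$l * steps j $l$k)"
    using assms by (auto simp: step_nth sum_distrib_left mult.assoc intro!: sum.cong)
  moreover have "damping * steps j $i$k \<le> step j $i$i * steps j $i$k"
    using step_diag_ge steps_nonneg by (rule mult_right_mono)
  ultimately show ?thesis by linarith
qed

text \<open>Column k of the product, rescaled by the decay damping^j that the diagonal alone allows.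
  It is nondecreasing in j, and across any cut it gains mass at rate h \<delta>.\<close>
definition spread :: "'n \<Rightarrow> nat \<Rightarrow> 'n \<Rightarrow> real" where
  "spread k j i = steps j $i$k / damping^j"

lemma spread_nonneg: "0 \<le> spread k j i"
  using steps_nonneg damping_pos by (simp add: spread_def)

lemma spread_0: "spread k 0 k = 1"
  by (simp add: spread_def steps_def mat_def)

lemma spread_Suc_ge:
  assumes "i \<notin> S"
  shows "spread k j i + h * (\<Sum>l\<in>S. A j $i$l * spread k j l) \<le> spread k (Suc j) i"
proof -
  have dj: "0 < damping^j" using damping_pos by simp
  have s0: "0 \<le> (\<Sum>l\<in>S. A j $i$l * spread k j l)"
    using assms spread_nonneg by (intro sum_nonneg mult_nonneg_nonneg) (auto intro!: offdiag_nonneg)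
  have "spread k j i + h * (\<Sum>l\<in>S. A j $i$l * spread k j l)
      \<le> spread k j i + (h / damping) * (\<Sum>l\<in>S. A j $i$l * spread k j l)"
    using s0 h_pos damping_pos damping_le_1
    by (intro add_left_mono mult_right_mono) (auto simp: field_simps)
  also have "\<dots> = (damping * steps j $i$k + h * (\<Sum>l\<in>S. A j $i$l * steps j $l$k)) / damping^(Suc j)"
    using dj damping_pos by (simp add: spread_def sum_divide_distrib[symmetric] field_simps)
  also have "\<dots> \<le> spread k (Suc j) i"
    using steps_Suc_ge[OF assms, of j k] damping_pos by (simp add: spread_def divide_right_mono)
  finally show ?thesis .
qed

lemma spread_mono: "j \<le> j' \<Longrightarrow> spread k j i \<le> spread k j' i"
proof (induction j' rule: dec_induct)
  case (step j') thus ?case using spread_Suc_ge[of i "{}" k j'] by simp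
qed simp

lemma spread_cut_sum:
  assumes S: "S \<noteq> {}" "S \<noteq> UNIV" and C: "0 \<le> C"
    and lower: "\<And>l j. l \<in> S \<Longrightarrow> j\<^sub>0 \<le> j \<Longrightarrow> C \<le> spread k j l"
  shows "real p * h * \<delta> * C \<le> (\<Sum>i\<in>-S. spread k (j\<^sub>0 + p) i)"
proof (induction p)
  case 0 thus ?case using spread_nonneg by (simp add: sum_nonneg)
next
  case (Suc p)
  let ?j = "j\<^sub>0 + p"
  have "C * \<delta> \<le> C * cut_flow (A ?j) S"
    by (rule mult_left_mono[OF cut_bound[OF S] C])
  also have "\<dots> \<le> (\<Sum>i\<in>-S. \<Sum>l\<in>S. A ?j $i$l * spread k ?j l)"
    unfolding cut_flow_def sum_distrib_left
  proof (intro sum_mono)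
    fix i l assume "i \<in> -S" "l \<in> S"
    hence "0 \<le> A ?j $i$l" "C \<le> spread k ?j l" using lower by (auto intro!: offdiag_nonneg)
    thus "C * A ?j $i$l \<le> A ?j $i$l * spread k ?j l" by (metis mult.commute mult_left_mono)
  qed
  finally have flow: "h * (C * \<delta>) \<le> h * (\<Sum>i\<in>-S. \<Sum>l\<in>S. A ?j $i$l * spread k ?j l)"
    using h_pos by (intro mult_left_mono) auto
  have "(\<Sum>i\<in>-S. spread k ?j i) + h * (\<Sum>i\<in>-S. \<Sum>l\<in>S. A ?j $i$l * spread k ?j l)
      = (\<Sum>i\<in>-S. spread k ?j i + h * (\<Sum>l\<in>S. A ?j $i$l * spread k ?j l))"
    by (simp only: sum.distrib sum_distrib_left)
  also have "\<dots> \<le> (\<Sum>i\<in>-S. spread k (Suc ?j) i)"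
    by (intro sum_mono spread_Suc_ge) auto
  finally have "(\<Sum>i\<in>-S. spread k ?j i) + h * (\<Sum>i\<in>-S. \<Sum>l\<in>S. A ?j $i$l * spread k ?j l)
      \<le> (\<Sum>i\<in>-S. spread k (Suc ?j) i)" .
  with Suc flow show ?case by (simp add: algebra_simps)
qed

text \<open>Stage m: m + 1 indices carry rescaled mass at least \<zeta>^m from time m p on. The next index is
  found among the others by averaging the mass that crossed the cut during p further steps.\<close>
lemma spread_stages:
  assumes \<delta>: "0 < \<delta>" and p: "0 < p" and m: "m \<le> CARD('n) - 1"
  defines "\<zeta> \<equiv> min 1 (real p * h * \<delta> / real CARD('n))"
  shows "\<exists>S. card S = Suc m \<and> (\<forall>l\<in>S. \<forall>j. m * p \<le> j \<longrightarrow> \<zeta>^m \<le> spread k j l)"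
  using m
proof (induction m)
  case 0
  have "1 \<le> spread k j k" for j using spread_mono[of 0 j k k] spread_0 by simp
  thus ?case by (intro exI[of _ "{k}"]) auto
next
  case (Suc m)
  have \<zeta>0: "0 \<le> \<zeta>" and \<zeta>1: "\<zeta> \<le> 1" using \<delta> h_pos by (auto simp: \<zeta>_def)
  obtain S where cS: "card S = Suc m" and S: "\<And>l j. l \<in> S \<Longrightarrow> m * p \<le> j \<Longrightarrow> \<zeta>^m \<le> spread k j l"
    using Suc by auto
  have SU: "S \<noteq> UNIV"
  proof
    assume "S = UNIV"
    thus False using cS Suc.prems by simp
  qed
  have Sne: "S \<noteq> {}" using cS by auto
  have "real p * h * \<delta> * \<zeta>^m \<le> (\<Sum>i\<in>-S. spread k (m * p + p) i)"
    by (rule spread_cut_sum[OF Sne SU]) (use \<zeta>0 S in auto)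
  then obtain i where i: "i \<in> -S"
    and spread_i: "real p * h * \<delta> * \<zeta>^m / real (card (-S)) \<le> spread k (m * p + p) i"
    using exists_ge_average[of "-S"] SU by auto
  have "-S \<noteq> {}" using SU by (metis Compl_empty_eq double_compl)
  hence card_pos: "0 < card (-S)" by (simp add: card_gt_0_iff)
  have "card (-S) \<le> CARD('n)" by (rule card_mono) auto
  have "\<zeta>^Suc m = \<zeta> * \<zeta>^m" by simp
  also have "\<dots> \<le> (real p * h * \<delta> / real CARD('n)) * \<zeta>^m"
    using \<zeta>0 by (intro mult_right_mono) (auto simp: \<zeta>_def)
  also have "\<dots> \<le> real p * h * \<delta> * \<zeta>^m / real (card (-S))"
    using \<open>card (-S) \<le> CARD('n)\<close> card_pos \<zeta>0 \<delta> h_pos by (simp add: divide_left_mono)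
  finally have new: "\<zeta>^Suc m \<le> spread k j i" if "Suc m * p \<le> j" for j
    using spread_i spread_mono[of "m * p + p" j k i] that by (simp add: add.commute)
  have old: "\<zeta>^Suc m \<le> spread k j l" if "l \<in> S" "Suc m * p \<le> j" for l j
    using S[of l j] that power_decreasing[of m "Suc m" \<zeta>] \<zeta>0 \<zeta>1 by simp
  have "card (insert i S) = Suc (Suc m)" using i cS by (simp add: card_insert_if)
  with new old show ?case by (intro exI[of _ "insert i S"]) auto
qed

lemma steps_ge:
  assumes \<delta>: "0 < \<delta>" and p: "0 < p"
  shows "exp (-2 * B * (real (CARD('n) * p) * h)) * (min 1 (real p * h * \<delta> / real CARD('n)))^(CARD('n) - 1)
           \<le> steps (CARD('n) * p) $i$k"
proof -
  define \<zeta> where "\<zeta> = min 1 (real p * h * \<delta> / real CARD('n))"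
  define q where "q = CARD('n) * p"
  obtain S where cS: "card S = Suc (CARD('n) - 1)"
    and S: "\<And>l j. l \<in> S \<Longrightarrow> (CARD('n) - 1) * p \<le> j \<Longrightarrow> \<zeta>^(CARD('n) - 1) \<le> spread k j l"
    using spread_stages[OF \<delta> p le_refl, of k] unfolding \<zeta>_def by blast
  have "S = UNIV" using cS by (simp add: card_subset_eq)
  hence spread_i: "\<zeta>^(CARD('n) - 1) \<le> spread k q i" using S[of i q] by (simp add: q_def)
  have "exp (-2 * B * (real q * h)) = exp (-2 * (h * B)) ^ q"
    by (simp add: exp_of_nat_mult[symmetric] ac_simps)
  also have "\<dots> \<le> damping ^ q"
    unfolding damping_def using h_pos B_nonneg h_small by (intro power_mono exp_neg_two_le_one_minus) auto
  finally have E: "exp (-2 * B * (real q * h)) \<le> damping^q" .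
  have "0 \<le> \<zeta>" using \<delta> h_pos by (simp add: \<zeta>_def)
  hence "exp (-2 * B * (real q * h)) * \<zeta>^(CARD('n) - 1) \<le> damping^q * spread k q i"
    using damping_pos by (intro mult_mono[OF E spread_i]) auto
  also have "damping^q * spread k q i = steps q $i$k" using damping_pos by (simp add: spread_def)
  finally show ?thesis unfolding q_def \<zeta>_def .
qed

lemma steps_between:
  assumes \<delta>: "0 < \<delta>" and p: "0 < p"
    and \<tau>: "1 \<le> real (CARD('n) * p) * h" "real (CARD('n) * p) * h \<le> 2"
  shows "exp (-4 * B) * (min 1 (\<delta> / real CARD('n)^2))^(CARD('n) - 1) \<le> steps (CARD('n) * p) $i$k"
    and "steps (CARD('n) * p) $i$k \<le> exp (2 * real CARD('n) * B)"
proof -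
  have "\<delta> / real CARD('n)^2 = (1 / real CARD('n)) * \<delta> / real CARD('n)" by (simp add: power2_eq_square)
  also have "\<dots> \<le> (real p * h) * \<delta> / real CARD('n)"
    using \<tau>(1) \<delta> by (intro divide_right_mono mult_right_mono) (auto simp: field_simps)
  finally have "min 1 (\<delta> / real CARD('n)^2) \<le> min 1 (real p * h * \<delta> / real CARD('n))" by simp
  hence "(min 1 (\<delta> / real CARD('n)^2))^(CARD('n) - 1) \<le> (min 1 (real p * h * \<delta> / real CARD('n)))^(CARD('n) - 1)"
    using \<delta> by (intro power_mono) auto
  moreover have "exp (-4 * B) \<le> exp (-2 * B * (real (CARD('n) * p) * h))"
    using mult_left_mono[OF \<tau>(2) B_nonneg] by (simp add: mult_ac)
  ultimately have "exp (-4 * B) * (min 1 (\<delta> / real CARD('n)^2))^(CARD('n) - 1)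
      \<le> exp (-2 * B * (real (CARD('n) * p) * h)) * (min 1 (real p * h * \<delta> / real CARD('n)))^(CARD('n) - 1)"
    using \<delta> by (intro mult_mono) auto
  thus "exp (-4 * B) * (min 1 (\<delta> / real CARD('n)^2))^(CARD('n) - 1) \<le> steps (CARD('n) * p) $i$k"
    using steps_ge[OF \<delta> p, of i k] by linarith
  have "steps (CARD('n) * p) $i$k \<le> exp (real CARD('n) * B * (real (CARD('n) * p) * h))"
    by (rule steps_le_exp)
  also have "\<dots> \<le> exp (2 * real CARD('n) * B)"
    using mult_left_mono[OF \<tau>(2), of "real CARD('n) * B"] B_nonneg by (simp add: mult_ac)
  finally show "steps (CARD('n) * p) $i$k \<le> exp (2 * real CARD('n) * B)" .
qed

end

section \<open>Fundamental solutions and the Euler scheme\<close>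

lemma matrix_add_rdistrib: "((A::real^'n^'m) + B) ** C = A ** C + B ** C"
  by (simp add: matrix_matrix_mult_def vec_eq_iff distrib_right sum.distrib)

lemma matrix_diff_ldistrib: "(A::real^'n^'m) ** (X - Y) = A ** X - A ** Y"
  by (simp add: matrix_matrix_mult_def vec_eq_iff right_diff_distrib sum_subtractf)

lemma bilinear_matrix_mult: "bilinear ((**) :: real^'n^'m \<Rightarrow> real^'k^'n \<Rightarrow> real^'k^'m)"
  unfolding bilinear_def
  by (auto intro!: linearI simp: matrix_add_ldistrib matrix_add_rdistrib scalar_matrix_assoc matrix_scalar_ac)

lemma bounded_linear_matrix_mult_right: "bounded_linear (\<lambda>X::real^'n^'m. X ** (C::real^'k^'n))"
  using bilinear_matrix_mult unfolding bilinear_conv_bounded_bilinear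
  by (rule bounded_bilinear.bounded_linear_left)

lemma has_integral_power_from_0:
  fixes r :: real assumes "0 \<le> r"
  shows "((\<lambda>u. u^k) has_integral (r^Suc k / real (Suc k))) {0..r}"
proof -
  have "((\<lambda>u. u^Suc k / real (Suc k)) has_real_derivative x^k) (at x within {0..r})" for x
    using DERIV_cdivide[OF DERIV_pow[of "Suc k" x], of "real (Suc k)"]
    by (simp add: has_field_derivative_at_within del: of_nat_Suc)
  hence "((\<lambda>u. u^k) has_integral (r^Suc k / real (Suc k) - 0^Suc k / real (Suc k))) {0..r}"
    using assms by (intro fundamental_theorem_of_calculus)
      (auto simp: has_real_derivative_iff_has_vector_derivative[symmetric])
  thus ?thesis by simp
qed

lemma uniform_limit_integral_tendsto:
  fixes f :: "'i \<Rightarrow> real \<Rightarrow> 'a::banach"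
  assumes u: "uniform_limit {a..b} f g F"
    and f: "\<And>n. f n integrable_on {a..b}" and g: "g integrable_on {a..b}"
  shows "((\<lambda>n. integral {a..b} (f n)) \<longlongrightarrow> integral {a..b} g) F"
proof (rule tendstoI)
  fix e :: real assume "0 < e"
  define c where "c = \<bar>b - a\<bar> + 1"
  have c: "0 < c" by (simp add: c_def add_nonneg_pos)
  define e' where "e' = e / (2 * c)"
  have "0 < e'" using \<open>0 < e\<close> c by (simp add: e'_def)
  with u have "\<forall>\<^sub>F n in F. \<forall>x\<in>{a..b}. norm (f n x - g x) < e'"
    by (auto simp: uniform_limit_iff dist_norm)
  thus "\<forall>\<^sub>F n in F. dist (integral {a..b} (f n)) (integral {a..b} g) < e"
  proof eventually_elim
    case (elim n)
    have "dist (integral {a..b} (f n)) (integral {a..b} g) = norm (integral {a..b} (\<lambda>x. f n x - g x))"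
      using f g by (simp add: integral_diff dist_norm)
    also have "\<dots> \<le> integral {a..b} (\<lambda>x. e')"
      using elim f g by (intro integral_norm_bound_integral) (auto intro!: integrable_diff less_imp_le)
    also have "\<dots> \<le> c * e'" using \<open>0 < e'\<close> by (simp add: c_def mult_right_mono)
    also have "\<dots> < e" using \<open>0 < e\<close> c by (simp add: e'_def)
    finally show ?case .
  qed
qed

lemma integral_average_mem:
  fixes f :: "real \<Rightarrow> 'a::euclidean_space"
  assumes S: "convex S" "closed S" and f: "(f has_integral I) {a..b}" "\<And>u. u \<in> {a..b} \<Longrightarrow> f u \<in> S"
    and ab: "a < b"
  shows "(1 / (b - a)) *\<^sub>R I \<in> S"
proof (rule ccontr)
  assume "(1 / (b - a)) *\<^sub>R I \<notin> S"
  then obtain w c where wc: "inner w ((1 / (b - a)) *\<^sub>R I) < c" "\<And>x. x \<in> S \<Longrightarrow> c < inner w x"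
    using separating_hyperplane_closed_point[OF S] by blast
  have int: "((\<lambda>u. inner w (f u)) has_integral inner w I) {a..b}"
    using has_integral_linear[OF f(1) bounded_linear_inner_right[of w]] by (simp add: o_def)
  have const: "((\<lambda>u. c) has_integral (b - a) * c) {a..b}" using has_integral_const_real[of c a b] ab by simp
  have "(b - a) * c \<le> inner w I"
    by (rule has_integral_le[OF const int]) (use wc(2) f(2) in \<open>auto intro: less_imp_le\<close>)
  thus False using wc(1) ab by (simp add: field_simps)
qed

locale bounded_control =
  fixes t :: real and M :: "real \<Rightarrow> real^'n^'n" and B K :: real
  assumes t_nonneg: "0 \<le> t" and M_measurable: "M \<in> borel_measurable (lebesgue_on {0..t})"
    and M_bound: "\<And>s. s \<in> {0..t} \<Longrightarrow> norm (M s) \<le> B"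
    and K_pos: "0 < K"
    and norm_matrix_mult: "\<And>(A :: real^'n^'n) (X :: real^'n^'n). norm (A ** X) \<le> K * norm A * norm X"
begin

definition L :: real where "L = K * B"

lemma B_nonneg: "0 \<le> B"
  using M_bound[of 0] t_nonneg by (meson atLeastAtMost_iff norm_ge_zero order.trans order_refl)

lemma L_nonneg: "0 \<le> L" using K_pos B_nonneg by (simp add: L_def)

lemma norm_M_mult: "s \<in> {0..t} \<Longrightarrow> norm (M s ** (X :: real^'n^'n)) \<le> L * norm X"
proof -
  assume "s \<in> {0..t}"
  hence "K * norm (M s) * norm X \<le> K * B * norm X"
    using M_bound K_pos by (intro mult_right_mono mult_left_mono) auto
  thus ?thesis using norm_matrix_mult[of "M s" X] by (simp add: L_def)
qed

lemma M_integrable: "{a..b} \<subseteq> {0..t} \<Longrightarrow> M integrable_on {a..b}"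
proof -
  have "M absolutely_integrable_on {0..t}"
    by (rule measurable_bounded_by_integrable_imp_absolutely_integrable[OF M_measurable, where g = "\<lambda>_. B"])
       (use M_bound in auto)
  thus "{a..b} \<subseteq> {0..t} \<Longrightarrow> ?thesis"
    using integrable_on_subinterval absolutely_integrable_on_def by blast
qed

lemma M_mult_integrable:
  assumes X: "continuous_on {0..t} X" and sub: "{a..b} \<subseteq> {0..t}"
  shows "(\<lambda>u. M u ** X u) integrable_on {a..b}"
proof -
  have "(\<lambda>u. M u ** X u) absolutely_integrable_on {0..t}"
  proof (rule absolutely_integrable_bounded_measurable_product[OF bilinear_matrix_mult M_measurable])
    show "bounded (M ` {0..t})" using M_bound unfolding bounded_iff by blast
    show "X absolutely_integrable_on {0..t}"
      using absolutely_integrable_continuous[of 0 t X] X by (simp add: cbox_interval)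
  qed simp
  thus ?thesis using sub integrable_on_subinterval absolutely_integrable_on_def by blast
qed

lemma norm_integral_M:
  assumes "0 \<le> a" "a \<le> b" "b \<le> t"
  shows "norm (integral {a..b} M) \<le> B * (b - a)"
proof -
  have "(M has_integral integral {a..b} M) (cbox a b)"
    using M_integrable[of a b] assms by (simp add: cbox_interval integrable_integral)
  hence "norm (integral {a..b} M) \<le> B * measure lborel (cbox a b)"
    by (rule has_integral_bound[OF B_nonneg]) (use M_bound assms in \<open>auto simp: cbox_interval\<close>)
  thus ?thesis using assms by simp
qed

primrec picard :: "nat \<Rightarrow> real \<Rightarrow> real^'n^'n" where
  "picard 0 = (\<lambda>r. mat 1)"
| "picard (Suc k) = (\<lambda>r. mat 1 + integral {0..r} (\<lambda>u. M u ** picard k u))"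

declare picard.simps(2) [simp del]

lemma continuous_on_picard: "continuous_on {0..t} (picard k)"
proof (induction k)
  case (Suc k)
  have "continuous_on {0..t} (\<lambda>r. integral {0..r} (\<lambda>u. M u ** picard k u))"
    by (rule indefinite_integral_continuous_1[OF M_mult_integrable[OF Suc]]) simp
  thus ?case by (simp add: continuous_on_add picard.simps(2))
qed simp

lemma picard_Suc_diff:
  assumes "r \<in> {0..t}"
  shows "(\<lambda>u. M u ** (picard (Suc k) u - picard k u)) integrable_on {0..r}"
    and "picard (Suc (Suc k)) r - picard (Suc k) r = integral {0..r} (\<lambda>u. M u ** (picard (Suc k) u - picard k u))"
proof -
  have int: "(\<lambda>u. M u ** picard j u) integrable_on {0..r}" for j
    using assms by (intro M_mult_integrable[OF continuous_on_picard]) auto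
  show "(\<lambda>u. M u ** (picard (Suc k) u - picard k u)) integrable_on {0..r}"
    using integrable_diff[OF int int] by (simp add: matrix_diff_ldistrib)
  have "picard (Suc (Suc k)) r - picard (Suc k) r
      = integral {0..r} (\<lambda>u. M u ** picard (Suc k) u) - integral {0..r} (\<lambda>u. M u ** picard k u)"
    by (simp only: picard.simps(2) add_diff_cancel_left)
  also have "\<dots> = integral {0..r} (\<lambda>u. M u ** (picard (Suc k) u - picard k u))"
    using integral_diff[OF int int] by (simp add: matrix_diff_ldistrib)
  finally show "picard (Suc (Suc k)) r - picard (Suc k) r
      = integral {0..r} (\<lambda>u. M u ** (picard (Suc k) u - picard k u))" .
qed

lemma norm_picard_diff:
  assumes "r \<in> {0..t}"
  shows "norm (picard (Suc k) r - picard k r) \<le> norm (mat 1 :: real^'n^'n) * (L * r)^Suc k / fact (Suc k)"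
  using assms
proof (induction k arbitrary: r)
  case 0
  have "norm (integral {0..r} (\<lambda>u. M u ** mat 1)) \<le> integral {0..r} (\<lambda>u. L * norm (mat 1 :: real^'n^'n))"
    using 0 norm_M_mult[of _ "mat 1"] M_mult_integrable[of "\<lambda>_. mat 1" 0 r]
    by (intro integral_norm_bound_integral) auto
  thus ?case using 0 by (simp add: picard.simps(2) mult_ac)
next
  case (Suc k)
  have r: "0 \<le> r" using Suc.prems by auto
  define c where "c = L * norm (mat 1 :: real^'n^'n) * L^Suc k / fact (Suc k)"
  have "norm (integral {0..r} (\<lambda>u. M u ** (picard (Suc k) u - picard k u))) \<le> integral {0..r} (\<lambda>u. c * u^Suc k)"
  proof (rule integral_norm_bound_integral[OF picard_Suc_diff(1)[OF Suc.prems]])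
    show "(\<lambda>u. c * u^Suc k) integrable_on {0..r}"
      using has_integral_mult_right[OF has_integral_power_from_0[OF r]] by blast
    fix u assume "u \<in> {0..r}"
    hence u: "u \<in> {0..t}" using Suc.prems by auto
    have "norm (M u ** (picard (Suc k) u - picard k u)) \<le> L * norm (picard (Suc k) u - picard k u)"
      by (rule norm_M_mult[OF u])
    also have "\<dots> \<le> L * (norm (mat 1 :: real^'n^'n) * (L * u)^Suc k / fact (Suc k))"
      using Suc.IH[OF u] L_nonneg by (rule mult_left_mono)
    finally show "norm (M u ** (picard (Suc k) u - picard k u)) \<le> c * u^Suc k"
      by (simp add: c_def power_mult_distrib mult_ac)
  qed
  moreover have "integral {0..r} (\<lambda>u. c * u^Suc k) = c * (r^Suc (Suc k) / real (Suc (Suc k)))"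
    using has_integral_mult_right[OF has_integral_power_from_0[OF r]] by (rule integral_unique)
  moreover have "c * (r^Suc (Suc k) / real (Suc (Suc k)))
      = norm (mat 1 :: real^'n^'n) * (L * r)^Suc (Suc k) / fact (Suc (Suc k))"
    unfolding c_def by (simp only: fact_Suc[of "Suc k"] power_mult_distrib power_Suc of_nat_Suc) (simp add: field_simps)
  ultimately show ?case using picard_Suc_diff(2)[OF Suc.prems] by simp
qed

definition fundamental_matrix :: "real \<Rightarrow> real^'n^'n" where
  "fundamental_matrix r = mat 1 + (\<Sum>k. picard (Suc k) r - picard k r)"

lemma picard_eq_sum: "picard n r = mat 1 + (\<Sum>k<n. picard (Suc k) r - picard k r)"
  by (induction n) (simp_all only: sum.lessThan_Suc picard.simps(1) sum.empty, simp_all add: algebra_simps)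

lemma uniform_limit_picard: "uniform_limit {0..t} picard fundamental_matrix sequentially"
proof -
  define bnd where "bnd k = norm (mat 1 :: real^'n^'n) * (L * t)^Suc k / fact (Suc k)" for k
  have "norm (picard (Suc k) r - picard k r) \<le> bnd k" if "r \<in> {0..t}" for k r
    unfolding bnd_def using that L_nonneg
    by (intro order_trans[OF norm_picard_diff[OF that]] divide_right_mono mult_left_mono power_mono) auto
  moreover have "summable bnd"
  proof -
    have "summable (\<lambda>k. (L * t)^Suc k / fact (Suc k))"
      using summable_exp[of "L * t"] by (subst summable_Suc_iff) (simp add: divide_inverse mult.commute)
    thus ?thesis unfolding bnd_def times_divide_eq_right[symmetric] by (rule summable_mult)
  qed
  ultimately have "uniform_limit {0..t} (\<lambda>n r. \<Sum>k<n. picard (Suc k) r - picard k r)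
      (\<lambda>r. \<Sum>k. picard (Suc k) r - picard k r) sequentially"
    by (rule Weierstrass_m_test)
  hence "uniform_limit {0..t} (\<lambda>n r. mat 1 + (\<Sum>k<n. picard (Suc k) r - picard k r)) fundamental_matrix sequentially"
    unfolding fundamental_matrix_def by (intro uniform_limit_intros) auto
  thus ?thesis by (simp only: picard_eq_sum[symmetric])
qed

lemma continuous_on_fundamental_matrix: "continuous_on {0..t} fundamental_matrix"
  by (rule uniform_limit_theorem[OF _ uniform_limit_picard]) (auto intro: always_eventually continuous_on_picard)

lemma uniform_limit_M_mult_picard:
  "uniform_limit {0..t} (\<lambda>k u. M u ** picard k u) (\<lambda>u. M u ** fundamental_matrix u) sequentially"
proof (rule uniform_limitI)
  fix e :: real assume "0 < e"
  hence "\<forall>\<^sub>F k in sequentially. \<forall>u\<in>{0..t}. dist (picard k u) (fundamental_matrix u) < e / (L + 1)"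
    using uniform_limit_picard L_nonneg by (auto simp: uniform_limit_iff)
  thus "\<forall>\<^sub>F k in sequentially. \<forall>u\<in>{0..t}. dist (M u ** picard k u) (M u ** fundamental_matrix u) < e"
  proof eventually_elim
    case (elim k)
    show ?case
    proof
      fix u assume u: "u \<in> {0..t}"
      have "dist (M u ** picard k u) (M u ** fundamental_matrix u) \<le> L * dist (picard k u) (fundamental_matrix u)"
        using norm_M_mult[OF u] by (simp add: dist_norm matrix_diff_ldistrib[symmetric])
      also have "\<dots> \<le> L * (e / (L + 1))" using elim u L_nonneg by (intro mult_left_mono) (auto intro: less_imp_le)
      also have "\<dots> < e" using \<open>0 < e\<close> L_nonneg by (simp add: field_simps)
      finally show "dist (M u ** picard k u) (M u ** fundamental_matrix u) < e" .
    qed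
  qed
qed

lemma fundamental_matrix_is_fundamental_solution: "is_fundamental_solution t M fundamental_matrix"
  unfolding is_fundamental_solution_def
proof (intro conjI ballI continuous_on_fundamental_matrix)
  fix s assume s: "s \<in> {0..t}"
  have sub: "{0..s} \<subseteq> {0..t}" using s by auto
  have "(\<lambda>k. integral {0..s} (\<lambda>u. M u ** picard k u)) \<longlonglongrightarrow> integral {0..s} (\<lambda>u. M u ** fundamental_matrix u)"
    using uniform_limit_on_subset[OF uniform_limit_M_mult_picard sub]
      M_mult_integrable[OF continuous_on_picard sub] M_mult_integrable[OF continuous_on_fundamental_matrix sub]
    by (rule uniform_limit_integral_tendsto)
  hence "(\<lambda>k. picard (Suc k) s) \<longlonglongrightarrow> mat 1 + integral {0..s} (\<lambda>u. M u ** fundamental_matrix u)"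
    unfolding picard.simps(2) by (intro tendsto_add tendsto_const)
  moreover have "(\<lambda>k. picard (Suc k) s) \<longlonglongrightarrow> fundamental_matrix s"
    using tendsto_uniform_limitI[OF uniform_limit_picard s] by (rule LIMSEQ_Suc)
  ultimately have "mat 1 + integral {0..s} (\<lambda>u. M u ** fundamental_matrix u) = fundamental_matrix s"
    by (rule LIMSEQ_unique)
  hence "fundamental_matrix s - mat 1 = integral {0..s} (\<lambda>u. M u ** fundamental_matrix u)"
    by (metis add_diff_cancel_left')
  thus "((\<lambda>u. M u ** fundamental_matrix u) has_integral (fundamental_matrix s - mat 1)) {0..s}"
    using integrable_integral[OF M_mult_integrable[OF continuous_on_fundamental_matrix sub]] by simp
qed

context
  fixes \<Psi> assumes fs: "is_fundamental_solution t M \<Psi>"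
begin

lemma fundamental_solution_continuous: "continuous_on {0..t} \<Psi>"
  using fs by (simp add: is_fundamental_solution_def)

lemma fundamental_solution_0: "\<Psi> 0 = mat 1"
proof -
  have "((\<lambda>u. M u ** \<Psi> u) has_integral (\<Psi> 0 - mat 1)) {0..0}"
    using fs t_nonneg unfolding is_fundamental_solution_def by (meson atLeastAtMost_iff order_refl)
  moreover have "((\<lambda>u. M u ** \<Psi> u) has_integral 0) {0..(0::real)}"
    using has_integral_refl(1)[of "\<lambda>u. M u ** \<Psi> u" "0::real"] by (simp add: cbox_interval)
  ultimately have "\<Psi> 0 - mat 1 = 0" by (rule has_integral_unique)
  thus ?thesis by simp
qed

lemma fundamental_solution_has_integral:
  assumes "0 \<le> a" "a \<le> b" "b \<le> t"
  shows "((\<lambda>u. M u ** \<Psi> u) has_integral (\<Psi> b - \<Psi> a)) {a..b}"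
proof -
  have int0: "((\<lambda>u. M u ** \<Psi> u) has_integral (\<Psi> s - mat 1)) {0..s}" if "s \<in> {0..t}" for s
    using fs that by (simp add: is_fundamental_solution_def)
  obtain J where J: "((\<lambda>u. M u ** \<Psi> u) has_integral J) {a..b}"
    using M_mult_integrable[OF fundamental_solution_continuous, of a b] assms by auto
  have "((\<lambda>u. M u ** \<Psi> u) has_integral ((\<Psi> a - mat 1) + J)) {0..b}"
    by (rule has_integral_combine[OF assms(1,2) int0 J]) (use assms in auto)
  moreover have "((\<lambda>u. M u ** \<Psi> u) has_integral (\<Psi> b - mat 1)) {0..b}"
    using int0[of b] assms by auto
  ultimately have "(\<Psi> a - mat 1) + J = \<Psi> b - mat 1" by (rule has_integral_unique)
  hence "J = \<Psi> b - \<Psi> a" by (simp add: algebra_simps)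
  thus ?thesis using J by simp
qed

lemma fundamental_solution_bounded:
  obtains C where "\<And>r. r \<in> {0..t} \<Longrightarrow> norm (\<Psi> r) \<le> C"
proof -
  have "bounded (\<Psi> ` {0..t})"
    using compact_imp_bounded[OF compact_continuous_image[OF fundamental_solution_continuous compact_Icc]] .
  then obtain C where "\<forall>X\<in>\<Psi> ` {0..t}. norm X \<le> C" unfolding bounded_iff by blast
  thus ?thesis using that by blast
qed

context
  fixes C assumes C: "\<And>r. r \<in> {0..t} \<Longrightarrow> norm (\<Psi> r) \<le> C"
begin

lemma fundamental_solution_bound_nonneg: "0 \<le> C"
  using C[of 0] t_nonneg by (meson atLeastAtMost_iff norm_ge_zero order.trans order_refl)

lemma fundamental_solution_lipschitz:
  assumes "0 \<le> a" "a \<le> b" "b \<le> t"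
  shows "norm (\<Psi> b - \<Psi> a) \<le> L * C * (b - a)"
proof -
  have "norm (\<Psi> b - \<Psi> a) \<le> (L * C) * measure lborel (cbox a b)"
  proof (rule has_integral_bound)
    show "0 \<le> L * C" using L_nonneg fundamental_solution_bound_nonneg by simp
    show "((\<lambda>u. M u ** \<Psi> u) has_integral (\<Psi> b - \<Psi> a)) (cbox a b)"
      using fundamental_solution_has_integral[OF assms] by (simp add: cbox_interval)
    fix u assume "u \<in> cbox a b"
    hence u: "u \<in> {0..t}" using assms by (auto simp: cbox_interval)
    show "norm (M u ** \<Psi> u) \<le> L * C"
      using norm_M_mult[OF u] C[OF u] L_nonneg by (meson mult_left_mono order.trans)
  qed
  thus ?thesis using assms by simp
qed

lemma fundamental_solution_step_error:
  assumes ab: "0 \<le> a" "a \<le> b" "b \<le> t"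
  shows "norm (\<Psi> b - (mat 1 + integral {a..b} M) ** \<Psi> a) \<le> L * L * C * (b - a)^2"
proof -
  have "M integrable_on {a..b}" using M_integrable ab by auto
  hence "((\<lambda>u. M u ** \<Psi> a) has_integral (integral {a..b} M ** \<Psi> a)) {a..b}"
    using has_integral_linear[OF integrable_integral bounded_linear_matrix_mult_right] by (simp add: o_def)
  with fundamental_solution_has_integral[OF ab]
  have "((\<lambda>u. M u ** \<Psi> u - M u ** \<Psi> a) has_integral ((\<Psi> b - \<Psi> a) - integral {a..b} M ** \<Psi> a)) {a..b}"
    by (rule has_integral_diff)
  moreover have "(\<Psi> b - \<Psi> a) - integral {a..b} M ** \<Psi> a = \<Psi> b - (mat 1 + integral {a..b} M) ** \<Psi> a"
    by (simp add: matrix_add_rdistrib)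
  ultimately have "((\<lambda>u. M u ** (\<Psi> u - \<Psi> a)) has_integral (\<Psi> b - (mat 1 + integral {a..b} M) ** \<Psi> a)) (cbox a b)"
    by (simp add: matrix_diff_ldistrib cbox_interval)
  hence "norm (\<Psi> b - (mat 1 + integral {a..b} M) ** \<Psi> a) \<le> (L * (L * C * (b - a))) * measure lborel (cbox a b)"
  proof (rule has_integral_bound[rotated])
    show "0 \<le> L * (L * C * (b - a))" using L_nonneg fundamental_solution_bound_nonneg ab by simp
    fix u assume "u \<in> cbox a b"
    hence u: "u \<in> {0..t}" "a \<le> u" "u \<le> b" using ab by (auto simp: cbox_interval)
    have "norm (\<Psi> u - \<Psi> a) \<le> L * C * (u - a)"
      by (rule fundamental_solution_lipschitz) (use u ab in auto)
    also have "\<dots> \<le> L * C * (b - a)"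
      using u L_nonneg fundamental_solution_bound_nonneg by (intro mult_left_mono) auto
    finally have "norm (\<Psi> u - \<Psi> a) \<le> L * C * (b - a)" .
    thus "norm (M u ** (\<Psi> u - \<Psi> a)) \<le> L * (L * C * (b - a))"
      using norm_M_mult[OF u(1)] L_nonneg by (meson mult_left_mono order.trans)
  qed
  thus ?thesis using ab by (simp add: power2_eq_square mult_ac)
qed

lemma euler_step_error:
  assumes ab: "0 \<le> a" "a \<le> b" "b \<le> t"
  shows "norm (\<Psi> b - (mat 1 + integral {a..b} M) ** X) \<le> L * L * C * (b - a)^2 + (1 + L * (b - a)) * norm (\<Psi> a - X)"
proof -
  define e where "e = \<Psi> a - X"
  have split: "\<Psi> b - (mat 1 + integral {a..b} M) ** X = (\<Psi> b - (mat 1 + integral {a..b} M) ** \<Psi> a) + (e + integral {a..b} M ** e)"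
    by (simp add: e_def matrix_diff_ldistrib matrix_add_rdistrib)
  have "norm (integral {a..b} M ** e) \<le> K * norm (integral {a..b} M) * norm e" by (rule norm_matrix_mult)
  also have "\<dots> \<le> K * (B * (b - a)) * norm e"
    using norm_integral_M[OF ab] K_pos by (intro mult_right_mono mult_left_mono) auto
  finally have "norm (integral {a..b} M ** e) \<le> L * (b - a) * norm e" by (simp add: L_def mult_ac)
  thus ?thesis
    unfolding split e_def[symmetric] using fundamental_solution_step_error[OF ab]
      norm_triangle_ineq[of e "integral {a..b} M ** e"]
      norm_triangle_ineq[of "\<Psi> b - (mat 1 + integral {a..b} M) ** \<Psi> a" "e + integral {a..b} M ** e"]
    by (simp add: algebra_simps)
qed
end

end

definition euler_step :: "nat \<Rightarrow> nat \<Rightarrow> real^'n^'n" where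
  "euler_step k j = mat 1 + integral {real j * (t / real k)..real (Suc j) * (t / real k)} M"

lemma euler_error:
  assumes fs: "is_fundamental_solution t M \<Psi>" and C: "\<And>r. r \<in> {0..t} \<Longrightarrow> norm (\<Psi> r) \<le> C"
    and k: "0 < k" and j: "j \<le> k"
  shows "norm (\<Psi> (real j * (t / real k)) - mat_prod (euler_step k) j)
           \<le> real j * (L * L * C * (t / real k)^2) * (1 + L * (t / real k))^j"
  using j
proof (induction j)
  case 0 thus ?case using fundamental_solution_0[OF fs] by simp
next
  case (Suc j)
  define h where "h = t / real k"
  define c where "c = L * L * C * h^2"
  define \<rho> where "\<rho> = 1 + L * h"
  have h0: "0 \<le> h" using t_nonneg by (simp add: h_def)
  have "real (Suc j) * h \<le> real k * h" using Suc.prems h0 by (simp add: mult_right_mono)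
  also have "\<dots> = t" using k by (simp add: h_def)
  finally have ab: "0 \<le> real j * h" "real j * h \<le> real (Suc j) * h" "real (Suc j) * h \<le> t"
    using h0 by (auto intro: mult_right_mono)
  have c0: "0 \<le> c" using fundamental_solution_bound_nonneg[OF fs C] by (simp add: c_def)
  have \<rho>1: "1 \<le> \<rho>" using L_nonneg h0 by (simp add: \<rho>_def)
  have step_length: "real (Suc j) * h - real j * h = h" by (simp add: algebra_simps)
  have step: "mat_prod (euler_step k) (Suc j)
      = (mat 1 + integral {real j * h..real (Suc j) * h} M) ** mat_prod (euler_step k) j"
    by (simp add: euler_step_def h_def)
  have "norm (\<Psi> (real (Suc j) * h) - mat_prod (euler_step k) (Suc j))
      \<le> c + \<rho> * norm (\<Psi> (real j * h) - mat_prod (euler_step k) j)"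
    using euler_step_error[OF fs C ab, of "mat_prod (euler_step k) j"] step_length
    unfolding step c_def \<rho>_def by simp
  also have "\<dots> \<le> c * \<rho>^Suc j + \<rho> * (real j * c * \<rho>^j)"
    using Suc \<rho>1 c0 one_le_power[OF \<rho>1, of "Suc j"] mult_left_mono[of 1 "\<rho>^Suc j" c]
    by (intro add_mono mult_left_mono) (auto simp: c_def \<rho>_def h_def)
  also have "\<dots> = real (Suc j) * c * \<rho>^Suc j" by (simp add: algebra_simps)
  finally show ?case by (simp add: c_def \<rho>_def h_def)
qed

lemma euler_product_error:
  assumes fs: "is_fundamental_solution t M \<Psi>" and C: "\<And>r. r \<in> {0..t} \<Longrightarrow> norm (\<Psi> r) \<le> C"
    and k: "0 < k"
  shows "norm (\<Psi> t - mat_prod (euler_step k) k) \<le> L * L * C * t^2 * exp (L * t) / real k"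
proof -
  have "(1 + L * (t / real k))^k \<le> exp (L * (t / real k))^k"
    using L_nonneg t_nonneg by (intro power_mono) auto
  also have "\<dots> = exp (L * t)" using k by (simp add: exp_of_nat_mult[symmetric])
  finally have growth: "(1 + L * (t / real k))^k \<le> exp (L * t)" .
  have "norm (\<Psi> t - mat_prod (euler_step k) k) \<le> real k * (L * L * C * (t / real k)^2) * (1 + L * (t / real k))^k"
    using euler_error[OF fs C k order_refl] k by simp
  also have "\<dots> = (L * L * C * t^2 / real k) * (1 + L * (t / real k))^k"
    using k by (simp add: power2_eq_square)
  also have "\<dots> \<le> (L * L * C * t^2 / real k) * exp (L * t)"
    using growth L_nonneg fundamental_solution_bound_nonneg[OF fs C] by (intro mult_left_mono) auto
  finally show ?thesis by simp
qed

lemma euler_product_tendsto_fundamental_solution: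
  assumes fs: "is_fundamental_solution t M \<Psi>"
  shows "(\<lambda>k. mat_prod (euler_step k) k) \<longlonglongrightarrow> \<Psi> t"
proof -
  obtain C where C: "\<And>r. r \<in> {0..t} \<Longrightarrow> norm (\<Psi> r) \<le> C"
    using fundamental_solution_bounded[OF fs] by blast
  have "(\<lambda>k. mat_prod (euler_step k) k - \<Psi> t) \<longlonglongrightarrow> 0"
  proof (rule Lim_null_comparison)
    show "\<forall>\<^sub>F k in sequentially. norm (mat_prod (euler_step k) k - \<Psi> t) \<le> L * L * C * t^2 * exp (L * t) / real k"
      by (rule eventually_mono[OF eventually_gt_at_top[of 0]])
        (subst norm_minus_commute, rule euler_product_error[OF fs C])
  qed (rule lim_const_over_n)
  thus ?thesis by (simp add: LIM_zero_iff)
qed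

lemma resolvent_eq_fundamental_matrix: "resolvent t M = fundamental_matrix t"
  unfolding resolvent_def
proof (rule the_equality)
  show "\<exists>\<Psi>. is_fundamental_solution t M \<Psi> \<and> \<Psi> t = fundamental_matrix t"
    using fundamental_matrix_is_fundamental_solution by blast
  fix A assume "\<exists>\<Psi>. is_fundamental_solution t M \<Psi> \<and> \<Psi> t = A"
  then obtain \<Psi> where "is_fundamental_solution t M \<Psi>" "\<Psi> t = A" by blast
  hence "(\<lambda>k. mat_prod (euler_step k) k) \<longlonglongrightarrow> A"
    using euler_product_tendsto_fundamental_solution by blast
  moreover have "(\<lambda>k. mat_prod (euler_step k) k) \<longlonglongrightarrow> fundamental_matrix t"
    by (rule euler_product_tendsto_fundamental_solution[OF fundamental_matrix_is_fundamental_solution])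
  ultimately show "A = fundamental_matrix t" by (rule LIMSEQ_unique)
qed

lemma euler_product_tendsto_resolvent: "(\<lambda>k. mat_prod (euler_step k) k) \<longlonglongrightarrow> resolvent t M"
  unfolding resolvent_eq_fundamental_matrix
  by (rule euler_product_tendsto_fundamental_solution[OF fundamental_matrix_is_fundamental_solution])

end

section \<open>Contraction of the resolvent\<close>

text \<open>Every block of the Euler product has entries in [\<gamma>, \<Gamma>] with
  \<gamma> = exp (-4 B) min (1, \<delta> / n^2)^(n - 1) and \<Gamma> = exp (2 n B); Birkhoff-type contraction
  then shrinks the Hilbert metric per block by the factor 1 minus this coefficient.\<close>
definition contraction_coefficient :: "nat \<Rightarrow> real \<Rightarrow> real \<Rightarrow> real" where
  "contraction_coefficient n B \<delta> =
     min (1/2) ((exp (-4 * B) * (min 1 (\<delta> / real n^2))^(n - 1) / exp (2 * real n * B))^6)"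

lemma contraction_coefficient_pos:
  assumes "0 < \<delta>" "0 < n"
  shows "0 < contraction_coefficient n B \<delta>"
proof -
  have "0 < min 1 (\<delta> / real n^2)" using assms by simp
  hence "0 < exp (-4 * B) * (min 1 (\<delta> / real n^2))^(n - 1) / exp (2 * real n * B)" by simp
  hence "0 < (exp (-4 * B) * (min 1 (\<delta> / real n^2))^(n - 1) / exp (2 * real n * B))^6"
    by (rule zero_less_power)
  thus ?thesis unfolding contraction_coefficient_def by (simp only: min_less_iff_conj) simp
qed

lemma contraction_coefficient_le_half: "contraction_coefficient n B \<delta> \<le> 1/2"
  by (simp add: contraction_coefficient_def)

lemma nat_floor_bounds:
  fixes t :: real
  assumes "1 \<le> t"
  shows "0 < nat \<lfloor>t\<rfloor>" "real (nat \<lfloor>t\<rfloor>) \<le> t" "t \<le> 2 * real (nat \<lfloor>t\<rfloor>)"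
proof -
  have floor: "1 \<le> \<lfloor>t\<rfloor>" "of_int \<lfloor>t\<rfloor> \<le> t" "t < of_int \<lfloor>t\<rfloor> + 1"
    using assms by (simp add: le_floor_iff, linarith+)
  hence "real (nat \<lfloor>t\<rfloor>) = of_int \<lfloor>t\<rfloor>" by simp
  with floor show "0 < nat \<lfloor>t\<rfloor>" "real (nat \<lfloor>t\<rfloor>) \<le> t" "t \<le> 2 * real (nat \<lfloor>t\<rfloor>)" by linarith+
qed

lemma one_minus_power_floor_le_exp:
  fixes \<epsilon> t :: real
  assumes "0 \<le> \<epsilon>" "\<epsilon> \<le> 1" "1 \<le> t"
  shows "(1 - \<epsilon>)^nat \<lfloor>t\<rfloor> \<le> exp (- (\<epsilon> / 2) * t)"
proof -
  have "(1 - \<epsilon>)^nat \<lfloor>t\<rfloor> \<le> exp (-\<epsilon>)^nat \<lfloor>t\<rfloor>"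
    using assms exp_ge_add_one_self[of "-\<epsilon>"] by (intro power_mono) auto
  also have "\<dots> = exp (- (\<epsilon> * real (nat \<lfloor>t\<rfloor>)))" by (simp add: exp_of_nat_mult[symmetric] mult.commute)
  also have "\<dots> \<le> exp (- (\<epsilon> / 2) * t)"
    using mult_left_mono[OF nat_floor_bounds(3)[OF assms(3)] assms(1)] by simp
  finally show ?thesis .
qed

locale metzler_control = bounded_control t M B K
  for t and M :: "real \<Rightarrow> real^'n^'n" and B K +
  fixes Ms :: "(real^'n^'n) set" and \<delta> :: real
  assumes Ms_convex: "convex Ms" and Ms_closed: "closed Ms"
    and M_in_Ms: "\<And>s. s \<in> {0..t} \<Longrightarrow> M s \<in> Ms"
    and Ms_metzler: "\<And>A. A \<in> Ms \<Longrightarrow> metzler A"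
    and Ms_norm: "\<And>A. A \<in> Ms \<Longrightarrow> norm A \<le> B"
    and \<delta>_pos: "0 < \<delta>"
    and Ms_cut: "\<And>S A. S \<noteq> {} \<Longrightarrow> S \<noteq> UNIV \<Longrightarrow> A \<in> Ms \<Longrightarrow> \<delta> \<le> cut_flow A S"
    and t_ge_1: "1 \<le> t"
begin

lemma Ms_entry_bound:
  assumes "A \<in> Ms"
  shows "\<bar>A$i$l\<bar> \<le> B"
proof -
  have "\<bar>A$i$l\<bar> \<le> norm (A$i)" by (rule component_le_norm_cart)
  also have "\<dots> \<le> norm A" by (rule Finite_Cartesian_Product.norm_nth_le)
  finally show ?thesis using Ms_norm[OF assms] by linarith
qed

lemma block_length_bounds: "0 < nat \<lfloor>t\<rfloor>" "1 \<le> t / real (nat \<lfloor>t\<rfloor>)" "t / real (nat \<lfloor>t\<rfloor>) \<le> 2"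
  using nat_floor_bounds[OF t_ge_1] by (simp_all add: pos_le_divide_eq pos_divide_le_eq)

lemma euler_average_mem:
  assumes "j < k"
  shows "(real k / t) *\<^sub>R integral {real j * (t / real k)..real (Suc j) * (t / real k)} M \<in> Ms"
proof -
  define a b where "a = real j * (t / real k)" and "b = real (Suc j) * (t / real k)"
  have t: "0 < t" using t_ge_1 by simp
  have "real (Suc j) * (t / real k) \<le> real k * (t / real k)"
    using assms t by (intro mult_right_mono) auto
  hence "a < b" "b \<le> t" using assms t by (auto simp: a_def b_def field_simps)
  moreover have "0 \<le> a" using t by (simp add: a_def)
  moreover have "1 / (b - a) = real k / t" using assms by (simp add: a_def b_def field_simps)
  ultimately show ?thesis
    using integral_average_mem[OF Ms_convex Ms_closed integrable_integral[OF M_integrable], of a b] M_in_Ms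
    by (simp add: a_def b_def)
qed

lemma euler_product_blocks:
  assumes p: "0 < p" "4 * B \<le> real p"
  defines "k \<equiv> nat \<lfloor>t\<rfloor> * (CARD('n) * p)"
  obtains P where "mat_prod (euler_step k) k = mat_prod P (nat \<lfloor>t\<rfloor>)"
    and "\<And>b i l. exp (-4 * B) * (min 1 (\<delta> / real CARD('n)^2))^(CARD('n) - 1) \<le> P b $i$l"
    and "\<And>b i l. P b $i$l \<le> exp (2 * real CARD('n) * B)"
proof -
  define m q h where "m = nat \<lfloor>t\<rfloor>" and "q = CARD('n) * p" and "h = t / real k"
  define A where "A j = (if j < k then (real k / t) *\<^sub>R integral {real j * h..real (Suc j) * h} M else M 0)" for j
  have k: "0 < k" and m: "0 < m" using p block_length_bounds by (simp_all add: k_def m_def)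
  have h: "0 < h" using k t_ge_1 by (simp add: h_def)
  have A_in: "A j \<in> Ms" for j
    using euler_average_mem[of j k] M_in_Ms[of 0] t_ge_1 by (simp add: A_def h_def)
  have "euler_step k j = mat 1 + h *\<^sub>R A j" if "j < k" for j
    using that k t_ge_1 by (simp add: euler_step_def A_def h_def)
  hence "mat_prod (euler_step k) k = mat_prod (\<lambda>j. mat 1 + h *\<^sub>R A j) (m * q)"
    by (auto simp: k_def m_def q_def intro: mat_prod_cong)
  also have "\<dots> = mat_prod (\<lambda>b. mat_prod (\<lambda>i. mat 1 + h *\<^sub>R A (b * q + i)) q) m"
    by (rule mat_prod_blocks)
  finally have decomposition: "mat_prod (euler_step k) k = mat_prod (\<lambda>b. mat_prod (\<lambda>i. mat 1 + h *\<^sub>R A (b * q + i)) q) m" .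
  have qh: "real q * h = t / real m" using p by (simp add: h_def k_def m_def q_def)
  have "1 \<le> real q * h" "real q * h \<le> 2" using qh block_length_bounds by (simp_all add: m_def)
  have "h * B \<le> 1/2"
  proof -
    have "h \<le> 2 / real q" using \<open>real q * h \<le> 2\<close> p by (simp add: q_def le_divide_eq mult.commute)
    also have "\<dots> \<le> 2 / real p" using p by (simp add: q_def frac_le)
    finally have "h * B \<le> 2 / real p * B" using B_nonneg by (rule mult_right_mono)
    also have "\<dots> \<le> 1/2" using p by (simp add: field_simps)
    finally show ?thesis .
  qed
  hence "exp (-4 * B) * (min 1 (\<delta> / real CARD('n)^2))^(CARD('n) - 1)
        \<le> mat_prod (\<lambda>i. mat 1 + h *\<^sub>R A (b * q + i)) q $i$l
      \<and> mat_prod (\<lambda>i. mat 1 + h *\<^sub>R A (b * q + i)) q $i$l \<le> exp (2 * real CARD('n) * B)" for b i l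
  proof -
    interpret block: metzler_steps "\<lambda>i. A (b * q + i)" B h \<delta>
      by unfold_locales (use Ms_metzler[OF A_in] Ms_entry_bound[OF A_in] Ms_cut[OF _ _ A_in] h \<open>h * B \<le> 1/2\<close>
          in \<open>auto simp: metzler_def\<close>)
    have "mat_prod (\<lambda>i. mat 1 + h *\<^sub>R A (b * q + i)) q = block.steps q"
      by (simp add: block.steps_def block.step_def[abs_def])
    thus ?thesis using block.steps_between[OF \<delta>_pos p(1)] \<open>1 \<le> real q * h\<close> \<open>real q * h \<le> 2\<close>
      by (simp add: q_def)
  qed
  with decomposition show ?thesis using that by (simp add: m_def)
qed

lemma euler_product_contraction:
  assumes p: "0 < p" "4 * B \<le> real p" and x: "x \<in> pos_orthant" and y: "y \<in> pos_orthant"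
  defines "k \<equiv> nat \<lfloor>t\<rfloor> * (CARD('n) * p)"
    and "\<gamma> \<equiv> exp (-4 * B) * (min 1 (\<delta> / real CARD('n)^2))^(CARD('n) - 1)"
  shows "\<And>i l. \<gamma>^nat \<lfloor>t\<rfloor> \<le> mat_prod (euler_step k) k $i$l"
    and "mat_prod (euler_step k) k *v x \<in> pos_orthant" "mat_prod (euler_step k) k *v y \<in> pos_orthant"
    and "hilbert_metric (mat_prod (euler_step k) k *v x) (mat_prod (euler_step k) k *v y)
           \<le> (1 - contraction_coefficient CARD('n) B \<delta>)^nat \<lfloor>t\<rfloor> * hilbert_metric x y"
proof -
  obtain P where E: "mat_prod (euler_step k) k = mat_prod P (nat \<lfloor>t\<rfloor>)"
    and P: "\<And>b i l. \<gamma> \<le> P b $i$l" "\<And>b i l. P b $i$l \<le> exp (2 * real CARD('n) * B)"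
    using euler_product_blocks[OF p] unfolding k_def \<gamma>_def by metis
  have \<gamma>: "0 < \<gamma>" using \<delta>_pos by (simp add: \<gamma>_def)
  hence pos: "\<And>b i l. 0 < P b $i$l" using P(1) less_le_trans by blast
  show "\<gamma>^nat \<lfloor>t\<rfloor> \<le> mat_prod (euler_step k) k $i$l" for i l
    using mat_prod_entries_ge[OF P(1) less_imp_le[OF \<gamma>] block_length_bounds(1)] by (simp add: E)
  show "mat_prod (euler_step k) k *v x \<in> pos_orthant" "mat_prod (euler_step k) k *v y \<in> pos_orthant"
    using mat_prod_pos_orthant[OF pos] x y by (simp_all add: E)
  show "hilbert_metric (mat_prod (euler_step k) k *v x) (mat_prod (euler_step k) k *v y)
      \<le> (1 - contraction_coefficient CARD('n) B \<delta>)^nat \<lfloor>t\<rfloor> * hilbert_metric x y"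
    using mat_prod_contraction[OF P \<gamma> x y, where m = "nat \<lfloor>t\<rfloor>"]
    by (simp add: E contraction_coefficient_def \<gamma>_def)
qed

text \<open>The Euler products along the step counts \<lfloor>t\<rfloor> n p, p \<rightarrow> \<infinity>, converge to the resolvent; their
  entries stay above \<gamma>^\<lfloor>t\<rfloor>, which keeps the limit strictly positive.\<close>
lemma resolvent_contraction:
  assumes x: "x \<in> pos_orthant" and y: "y \<in> pos_orthant"
  shows "hilbert_metric (resolvent t M *v x) (resolvent t M *v y)
           \<le> (1 - contraction_coefficient CARD('n) B \<delta>)^nat \<lfloor>t\<rfloor> * hilbert_metric x y"
proof -
  define \<gamma> where "\<gamma> = exp (-4 * B) * (min 1 (\<delta> / real CARD('n)^2))^(CARD('n) - 1)"
  define E where "E p = mat_prod (euler_step (nat \<lfloor>t\<rfloor> * (CARD('n) * p))) (nat \<lfloor>t\<rfloor> * (CARD('n) * p))" for p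
  have "strict_mono (\<lambda>p. nat \<lfloor>t\<rfloor> * (CARD('n) * p))" using block_length_bounds by (intro strict_monoI) simp
  from LIMSEQ_subseq_LIMSEQ[OF euler_product_tendsto_resolvent this]
  have lim: "E \<longlonglongrightarrow> resolvent t M" unfolding E_def by (simp add: o_def)
  have large: "\<forall>\<^sub>F p in sequentially. 0 < p \<and> 4 * B \<le> real p"
    using eventually_ge_at_top[of "nat \<lceil>4 * B\<rceil> + 1"] by eventually_elim linarith
  have "\<gamma>^nat \<lfloor>t\<rfloor> \<le> resolvent t M $i$l" for i l
  proof (rule tendsto_lowerbound)
    show "(\<lambda>p. E p $i$l) \<longlonglongrightarrow> resolvent t M $i$l" by (intro tendsto_vec_nth lim)
    show "\<forall>\<^sub>F p in sequentially. \<gamma>^nat \<lfloor>t\<rfloor> \<le> E p $i$l"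
      using large by eventually_elim (use euler_product_contraction(1) x y in \<open>simp add: E_def \<gamma>_def\<close>)
  qed simp
  moreover have "0 < \<gamma>" using \<delta>_pos by (simp add: \<gamma>_def)
  ultimately have R_pos: "resolvent t M *v z \<in> pos_orthant" if "z \<in> pos_orthant" for z
    by (intro mult_vec_pos_orthant[OF _ that]) (meson less_le_trans zero_less_power)
  show ?thesis
  proof (rule hilbert_metric_le_of_tendsto[OF lim R_pos[OF x] R_pos[OF y]])
    show "\<forall>\<^sub>F p in sequentially. E p *v x \<in> pos_orthant \<and> E p *v y \<in> pos_orthant \<and>
        hilbert_metric (E p *v x) (E p *v y) \<le> (1 - contraction_coefficient CARD('n) B \<delta>)^nat \<lfloor>t\<rfloor> * hilbert_metric x y"
      using large by eventually_elim (use euler_product_contraction(2-4) x y in \<open>simp add: E_def\<close>)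
  qed
qed

lemma resolvent_contraction_exp:
  assumes "x \<in> pos_orthant" "y \<in> pos_orthant"
  shows "hilbert_metric (resolvent t M *v x) (resolvent t M *v y)
           \<le> exp (- (contraction_coefficient CARD('n) B \<delta> / 2) * t) * hilbert_metric x y"
proof -
  have "0 < contraction_coefficient CARD('n) B \<delta>" by (rule contraction_coefficient_pos[OF \<delta>_pos]) simp
  hence "(1 - contraction_coefficient CARD('n) B \<delta>)^nat \<lfloor>t\<rfloor> \<le> exp (- (contraction_coefficient CARD('n) B \<delta> / 2) * t)"
    using contraction_coefficient_le_half[of "CARD('n)" B \<delta>]
    by (intro one_minus_power_floor_le_exp t_ge_1) auto
  with resolvent_contraction[OF assms] hilbert_metric_nonneg[OF assms] show ?thesis
    by (meson mult_right_mono order_trans)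
qed

end

theorem lemma3:
  fixes Ms :: "(real^'n^'n) set"
  assumes "compact Ms" and "convex Ms"
    and "\<And>A. A \<in> Ms \<Longrightarrow> metzler A \<and> irreducible_mat A"
  shows "\<exists>T>0. \<exists>\<mu>>0. \<forall>t\<ge>T. \<forall>M. admissible_control t Ms M \<longrightarrow>
           (\<forall>x\<in>pos_orthant. \<forall>y\<in>pos_orthant.
              hilbert_metric (resolvent t M *v x) (resolvent t M *v y)
                \<le> exp (- \<mu> * t) * hilbert_metric x y)"
proof -
  obtain B where B: "\<And>A. A \<in> Ms \<Longrightarrow> norm A \<le> B"
    using compact_imp_bounded[OF assms(1)] by (auto simp: bounded_iff)
  obtain \<delta> where \<delta>: "0 < \<delta>" "\<And>S A. S \<noteq> {} \<Longrightarrow> S \<noteq> UNIV \<Longrightarrow> A \<in> Ms \<Longrightarrow> \<delta> \<le> cut_flow A S"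
    using compact_irreducible_cut_flow_bound[OF assms(1,3)] by blast
  obtain K where K: "0 < K" "\<And>(A :: real^'n^'n) (X :: real^'n^'n). norm (A ** X) \<le> K * norm A * norm X"
    using bilinear_bounded_pos[OF bilinear_matrix_mult] by blast
  have "metzler_control t M B K Ms \<delta>" if "1 \<le> t" "admissible_control t Ms M" for t M
    using that K \<delta> B assms(2,3) compact_imp_closed[OF assms(1)]
    by unfold_locales (auto simp: admissible_control_def)
  note contraction = metzler_control.resolvent_contraction_exp[OF this]
  show ?thesis
  proof (intro exI conjI)
    show "(0::real) < 1" "0 < contraction_coefficient CARD('n) B \<delta> / 2"
      using contraction_coefficient_pos[OF \<delta>(1)] by simp_all
    show "\<forall>t\<ge>1. \<forall>M. admissible_control t Ms M \<longrightarrow> (\<forall>x\<in>pos_orthant. \<forall>y\<in>pos_orthant.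
        hilbert_metric (resolvent t M *v x) (resolvent t M *v y)
          \<le> exp (- (contraction_coefficient CARD('n) B \<delta> / 2) * t) * hilbert_metric x y)"
      using contraction by blast
  qed
qed

end
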